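(* Let $\vec H$ be a fixed oriented graph whose underlying graph $H$ is bipartite, and suppose $\vec H$ is well-oriented with respect to the bipartition $V(H)=A(H)\sqcup B(H)$, i.e. every arc of $\vec H$ goes from $A(H)$ to $B(H)$. Let \[\Delta'(H)=\min\Big\{\max_{v\in A(H)}\deg_H(v),\ \max_{v\in B(H)}\deg_H(v)\Big\}.\] Then $\mathrm{ex}(n,\vec H)=O(n^{2-1/\Delta'(H)})$.
   Context: An oriented graph is a digraph in which each pair of vertices is joined by at most one arc. $\mathrm{ex}(n,\vec H)$ is the maximum number of arcs in an $n$-vertex oriented graph that does not contain $\vec H$ as a subgraph (respecting orientations). *)

theory Defs
  imports Complex_Main "HOL-Library.Landau_Symbols"
begin

definition oriented_graph :: "'a set \<Rightarrow> ('a \<times> 'a) set \<Rightarrow> bool" where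
  "oriented_graph V E \<longleftrightarrow> finite V \<and> E \<subseteq> V \<times> V \<and>
     (\<forall>v. (v, v) \<notin> E) \<and> (\<forall>u v. (u, v) \<in> E \<longrightarrow> (v, u) \<notin> E)"

definition contains_oriented ::
  "'a set \<Rightarrow> ('a \<times> 'a) set \<Rightarrow> 'b set \<Rightarrow> ('b \<times> 'b) set \<Rightarrow> bool" where
  "contains_oriented V E VH EH \<longleftrightarrow>
     (\<exists>f. inj_on f VH \<and> f ` VH \<subseteq> V \<and> (\<forall>(u, v) \<in> EH. (f u, f v) \<in> E))"

definition ex_oriented :: "nat \<Rightarrow> 'b set \<Rightarrow> ('b \<times> 'b) set \<Rightarrow> nat" where
  "ex_oriented n VH EH = Sup {card E | E. oriented_graph {0..<n} E \<and>
                                 \<not> contains_oriented {0..<n} E VH EH}"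

definition udeg :: "('b \<times> 'b) set \<Rightarrow> 'b \<Rightarrow> nat" where
  "udeg EH v = card {u. (v, u) \<in> EH \<or> (u, v) \<in> EH}"

definition Delta' :: "('b \<times> 'b) set \<Rightarrow> 'b set \<Rightarrow> 'b set \<Rightarrow> nat" where
  "Delta' EH A B = min (Sup (udeg EH ` A)) (Sup (udeg EH ` B))"

end

theory Submission
  imports Defs "HOL-Analysis.Convex"
begin

text \<open>Dependent random choice, with the probabilistic argument replaced by double counting.
Let r be the maximal out-degree in A, a = |V(H)|, and let G have n vertices and e arcs.
Summing the sizes of the common out-neighbourhoods of all r-tuples of vertices of G gives the
sum of the r-th powers of the in-degrees, which is at least e^r / n^(r-1) by convexity; an
r-tuple with fewer than a common in-neighbours (a bad tuple) lies in at most a^r of these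
neighbourhoods. So if e^r > (a^r + a) n^(2r-1), some common out-neighbourhood exceeds the
number of bad tuples inside it by more than a, and deleting one vertex of each of them leaves a
set U of more than a vertices any r of which have at least a common in-neighbours. Then B embeds
into U, and the vertices of A can be placed one by one into the common in-neighbourhoods of the
images of their out-neighbours. If the smaller maximal degree is attained in B, reverse all arcs.\<close>

lemma convex_on_nonneg_power: "convex_on {0::real..} (\<lambda>x. x ^ n)"
  by (cases "even n") (auto intro: convex_on_subset[OF convex_power_even] convex_power_odd)

lemma power_sum_le_card_power_sum:
  fixes f :: "'a \<Rightarrow> real"
  assumes "finite I" "\<And>i. i \<in> I \<Longrightarrow> 0 \<le> f i" "0 < r"
  shows "(\<Sum>i\<in>I. f i) ^ r \<le> real (card I) ^ (r - 1) * (\<Sum>i\<in>I. f i ^ r)"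
proof (cases "I = {}")
  case True
  then show ?thesis using assms(3) by (simp add: zero_power)
next
  case False
  let ?c = "real (card I)"
  have c: "0 < ?c" using assms(1) False by (simp add: card_gt_0_iff)
  have "(\<Sum>i\<in>I. (1 / ?c) *\<^sub>R f i) ^ r \<le> (\<Sum>i\<in>I. 1 / ?c * f i ^ r)"
    by (rule convex_on_sum[OF assms(1) False convex_on_nonneg_power]) (use assms c in auto)
  then have "(\<Sum>i\<in>I. f i) ^ r / ?c ^ r \<le> (\<Sum>i\<in>I. f i ^ r) / ?c"
    by (simp add: power_divide flip: sum_divide_distrib)
  then have "(\<Sum>i\<in>I. f i) ^ r \<le> (\<Sum>i\<in>I. f i ^ r) / ?c * ?c ^ r"
    using c by (simp add: pos_divide_le_eq)
  also have "?c ^ r = ?c ^ (r - 1) * ?c"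
    using assms(3) by (simp flip: power_Suc2)
  finally show ?thesis
    using c by (simp add: mult.commute)
qed

lemma card_filter_eq_sum_of_bool:
  assumes "finite A"
  shows "card {x\<in>A. P x} = (\<Sum>x\<in>A. of_bool (P x))"
  using assms by (simp add: Int_def)

lemma sum_card_lists_filter:
  assumes "finite V" "finite W"
  shows "(\<Sum>xs\<in>{xs. set xs \<subseteq> V \<and> length xs = r}. card {w\<in>W. \<forall>x\<in>set xs. P x w})
    = (\<Sum>w\<in>W. card {x\<in>V. P x w} ^ r)"
proof -
  let ?X = "{xs. set xs \<subseteq> V \<and> length xs = r}"
  have finX: "finite ?X" using assms(1) by (rule finite_lists_length_eq)
  have "(\<Sum>xs\<in>?X. card {w\<in>W. \<forall>x\<in>set xs. P x w})
      = (\<Sum>xs\<in>?X. \<Sum>w\<in>W. of_bool (\<forall>x\<in>set xs. P x w))"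
    using assms(2) by (simp only: card_filter_eq_sum_of_bool)
  also have "\<dots> = (\<Sum>w\<in>W. \<Sum>xs\<in>?X. of_bool (\<forall>x\<in>set xs. P x w))"
    by (rule sum.swap)
  also have "\<dots> = (\<Sum>w\<in>W. card {xs\<in>?X. \<forall>x\<in>set xs. P x w})"
    using finX by (simp only: card_filter_eq_sum_of_bool)
  also have "\<dots> = (\<Sum>w\<in>W. card {xs. set xs \<subseteq> {x\<in>V. P x w} \<and> length xs = r})"
    by (intro sum.cong refl arg_cong[where f=card]) auto
  also have "\<dots> = (\<Sum>w\<in>W. card {x\<in>V. P x w} ^ r)"
    using assms(1) by (simp add: card_lists_length_eq)
  finally show ?thesis .
qed

definition common_in_nbhd :: "'a set \<Rightarrow> ('a \<times> 'a) set \<Rightarrow> 'a set \<Rightarrow> 'a set" where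
  "common_in_nbhd V E T = {w \<in> V. \<forall>t\<in>T. (w, t) \<in> E}"

lemma card_eq_sum_in_degree:
  assumes "finite V" "E \<subseteq> V \<times> V"
  shows "card E = (\<Sum>v\<in>V. card (common_in_nbhd V E {v}))"
proof -
  have "E\<inverse> = (SIGMA v:V. common_in_nbhd V E {v})"
    using assms(2) by (auto simp: common_in_nbhd_def)
  then have "card E = card (SIGMA v:V. common_in_nbhd V E {v})"
    by (metis card_inverse)
  also have "\<dots> = (\<Sum>v\<in>V. card (common_in_nbhd V E {v}))"
    using assms(1) by (simp add: common_in_nbhd_def)
  finally show ?thesis .
qed

lemma list_of_length_with_set:
  assumes "finite T" "T \<noteq> {}" "card T \<le> r"
  obtains xs where "set xs = T" "length xs = r"
proof -
  obtain ys where ys: "set ys = T" "distinct ys"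
    using finite_distinct_list[OF assms(1)] by blast
  then have "length ys = card T" by (metis distinct_card)
  then show ?thesis
    using ys assms by (intro that[of "ys @ replicate (r - card T) (hd ys)"]) auto
qed

lemma card_power_le_sum_card_common_out_nbhd:
  assumes finV: "finite V" and EV: "E \<subseteq> V \<times> V" and r: "0 < r"
  shows "card E ^ r \<le> card V ^ (r - 1) *
    (\<Sum>xs\<in>{xs. set xs \<subseteq> V \<and> length xs = r}. card (common_in_nbhd V (E\<inverse>) (set xs)))"
proof -
  have "real (card E) ^ r
      \<le> real (card V) ^ (r - 1) * (\<Sum>v\<in>V. real (card (common_in_nbhd V E {v})) ^ r)"
    using power_sum_le_card_power_sum[OF finV _ r, of "\<lambda>v. real (card (common_in_nbhd V E {v}))"]
    by (simp add: card_eq_sum_in_degree[OF finV EV])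
  also have "(\<Sum>v\<in>V. real (card (common_in_nbhd V E {v})) ^ r)
      = (\<Sum>xs\<in>{xs. set xs \<subseteq> V \<and> length xs = r}. real (card (common_in_nbhd V (E\<inverse>) (set xs))))"
    using sum_card_lists_filter[OF finV finV, where r=r and P="\<lambda>x v. (x, v) \<in> E"]
    unfolding of_nat_sum[symmetric] of_nat_power[symmetric] by (simp add: common_in_nbhd_def)
  finally show ?thesis
    unfolding of_nat_le_iff[where 'a=real, symmetric] by simp
qed

lemma sum_card_bad_tuples_le:
  assumes finV: "finite V"
  shows "(\<Sum>xs\<in>{xs. set xs \<subseteq> V \<and> length xs = r}.
      card {ys. set ys \<subseteq> common_in_nbhd V (E\<inverse>) (set xs) \<and> length ys = r \<and>
                card (common_in_nbhd V E (set ys)) < a})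
    \<le> a ^ r * card V ^ r"
proof -
  define X where "X = {xs. set xs \<subseteq> V \<and> length xs = r}"
  define Bad where "Bad = {ys \<in> X. card (common_in_nbhd V E (set ys)) < a}"
  have finX: "finite X"
    using finV by (simp add: X_def finite_lists_length_eq)
  then have finBad: "finite Bad"
    by (simp add: Bad_def)
  have "{ys. set ys \<subseteq> common_in_nbhd V (E\<inverse>) (set xs) \<and> length ys = r \<and>
        card (common_in_nbhd V E (set ys)) < a}
      = {ys\<in>Bad. \<forall>x\<in>set xs. \<forall>t\<in>set ys. (x, t) \<in> E}" for xs
    by (auto simp: Bad_def X_def common_in_nbhd_def)
  then have "(\<Sum>xs\<in>X. card {ys. set ys \<subseteq> common_in_nbhd V (E\<inverse>) (set xs) \<and> length ys = r \<and>
        card (common_in_nbhd V E (set ys)) < a})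
      = (\<Sum>ys\<in>Bad. card (common_in_nbhd V E (set ys)) ^ r)"
    using sum_card_lists_filter[OF finV finBad, where r=r and P="\<lambda>x ys. \<forall>t\<in>set ys. (x, t) \<in> E"]
    by (simp add: X_def common_in_nbhd_def)
  also have "\<dots> \<le> (\<Sum>ys\<in>Bad. a ^ r)"
    by (intro sum_mono power_mono) (auto simp: Bad_def)
  also have "\<dots> \<le> a ^ r * card V ^ r"
  proof -
    have "card Bad \<le> card X" using finX by (intro card_mono) (auto simp: Bad_def)
    then show ?thesis using finV by (simp add: X_def card_lists_length_eq)
  qed
  finally show ?thesis by (simp add: X_def)
qed

lemma tuple_with_few_bad_subtuples:
  fixes V :: "'a set" and E :: "('a \<times> 'a) set"
  assumes finV: "finite V" and EV: "E \<subseteq> V \<times> V" and r: "0 < r"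
    and many_arcs: "(a ^ r + a) * card V ^ (2 * r - 1) < card E ^ r"
  obtains xs where "set xs \<subseteq> V" "length xs = r"
    "card {ys. set ys \<subseteq> common_in_nbhd V (E\<inverse>) (set xs) \<and> length ys = r \<and>
               card (common_in_nbhd V E (set ys)) < a} + a
      < card (common_in_nbhd V (E\<inverse>) (set xs))"
proof -
  define n where "n = card V"
  define X where "X = {xs. set xs \<subseteq> V \<and> length xs = r}"
  define N where "N xs = card (common_in_nbhd V (E\<inverse>) (set xs))" for xs
  define bad where "bad xs = card {ys. set ys \<subseteq> common_in_nbhd V (E\<inverse>) (set xs) \<and>
    length ys = r \<and> card (common_in_nbhd V E (set ys)) < a}" for xs
  have "(a ^ r + a) * n ^ (2 * r - 1) = n ^ (r - 1) * ((a ^ r + a) * n ^ r)"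
    using r by (simp flip: power_add mult_2)
  then have "n ^ (r - 1) * ((a ^ r + a) * n ^ r) < n ^ (r - 1) * (\<Sum>xs\<in>X. N xs)"
    using many_arcs card_power_le_sum_card_common_out_nbhd[OF finV EV r]
    unfolding n_def X_def N_def by linarith
  then have "(a ^ r + a) * n ^ r < (\<Sum>xs\<in>X. N xs)"
    by simp
  moreover have "(\<Sum>xs\<in>X. bad xs) \<le> a ^ r * n ^ r"
    using sum_card_bad_tuples_le[OF finV] unfolding X_def bad_def n_def .
  moreover have "card X = n ^ r"
    using finV by (simp add: X_def n_def card_lists_length_eq)
  ultimately have "(\<Sum>xs\<in>X. bad xs + a) < (\<Sum>xs\<in>X. N xs)"
    by (simp add: sum.distrib algebra_simps)
  then obtain xs where "xs \<in> X" "bad xs + a < N xs"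
    by (metis (no_types, lifting) not_less sum_mono)
  then show thesis
    by (intro that[of xs]) (auto simp: X_def N_def bad_def)
qed

lemma dependent_random_choice:
  fixes V :: "'a set" and E :: "('a \<times> 'a) set"
  assumes finV: "finite V" and EV: "E \<subseteq> V \<times> V" and r: "0 < r"
    and many_arcs: "(a ^ r + a) * card V ^ (2 * r - 1) < card E ^ r"
  obtains U where "U \<subseteq> V" "a < card U"
    "\<And>T. T \<subseteq> U \<Longrightarrow> card T \<le> r \<Longrightarrow> a \<le> card (common_in_nbhd V E T)"
proof -
  obtain xs where xs: "set xs \<subseteq> V" "length xs = r"
    "card {ys. set ys \<subseteq> common_in_nbhd V (E\<inverse>) (set xs) \<and> length ys = r \<and>
               card (common_in_nbhd V E (set ys)) < a} + a
      < card (common_in_nbhd V (E\<inverse>) (set xs))"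
    using tuple_with_few_bad_subtuples[OF assms] by blast
  define N where "N = common_in_nbhd V (E\<inverse>) (set xs)"
  define Bad where "Bad = {ys. set ys \<subseteq> N \<and> length ys = r \<and> card (common_in_nbhd V E (set ys)) < a}"
  define U where "U = N - hd ` Bad"
  have finBad: "finite Bad"
    using finite_lists_length_eq[OF finite_subset[OF _ finV], of N r]
    by (auto simp: Bad_def N_def common_in_nbhd_def elim: finite_subset[rotated])
  show thesis
  proof (rule that[of U])
    show UV: "U \<subseteq> V" by (auto simp: U_def N_def common_in_nbhd_def)
    have "card N - card Bad \<le> card U"
      using finBad unfolding U_def
      by (meson card_image_le diff_card_le_card_Diff diff_le_mono2 finite_imageI le_trans)
    then show "a < card U" using xs(3) by (simp add: N_def Bad_def)
    fix T assume T: "T \<subseteq> U" "card T \<le> r"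
    show "a \<le> card (common_in_nbhd V E T)"
    proof (cases "T = {}")
      case True
      then show ?thesis
        using \<open>a < card U\<close> card_mono[OF finV UV] by (simp add: common_in_nbhd_def)
    next
      case False
      moreover have "finite T" using T(1) UV finV by (meson finite_subset)
      ultimately obtain ys where ys: "set ys = T" "length ys = r"
        using T(2) by (elim list_of_length_with_set)
      have "hd ys \<in> T" using ys False by (metis hd_in_set set_empty)
      then have "ys \<notin> Bad" using T(1) by (auto simp: U_def)
      moreover have "set ys \<subseteq> N" using ys T by (auto simp: U_def)
      ultimately show ?thesis using ys by (auto simp: Bad_def)
    qed
  qed
qed

lemma contains_oriented_if_rich_set:
  fixes VH :: "'b set" and EH :: "('b \<times> 'b) set" and V :: "'a set" and E :: "('a \<times> 'a) set"
  assumes finVH: "finite VH" and AB: "A \<inter> B = {}" "A \<union> B = VH" "EH \<subseteq> A \<times> B"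
    and out_deg: "\<And>v. v \<in> A \<Longrightarrow> card {z. (v, z) \<in> EH} \<le> r"
    and finV: "finite V" and UV: "U \<subseteq> V" and cardU: "card B \<le> card U"
    and rich: "\<And>T. T \<subseteq> U \<Longrightarrow> card T \<le> r \<Longrightarrow> card VH \<le> card (common_in_nbhd V E T)"
  shows "contains_oriented V E VH EH"
proof -
  have finA: "finite A" and finB: "finite B" using finVH AB(2) by auto
  have fresh: "\<exists>w\<in>common_in_nbhd V E T. w \<notin> S"
    if "T \<subseteq> U" "card T \<le> r" "finite S" "card S < card VH" for T S
  proof (rule ccontr)
    assume "\<not> ?thesis"
    then have "card (common_in_nbhd V E T) \<le> card S" by (intro card_mono[OF that(3)]) blast
    then show False using rich[OF that(1,2)] that(4) by linarith
  qed
  obtain g where g: "inj_on g B" "g ` B \<subseteq> U"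
    using card_le_inj[OF finB finite_subset[OF UV finV] cardU] by blast
  have "\<exists>f. inj_on f (B \<union> A') \<and> f ` B \<subseteq> U \<and> f ` A' \<subseteq> V \<and>
      (\<forall>(u, z)\<in>EH. u \<in> A' \<longrightarrow> (f u, f z) \<in> E)" if "A' \<subseteq> A" for A'
    using finite_subset[OF that finA] that
  proof (induction A' rule: finite_subset_induct')
    case empty
    then show ?case using g by auto
  next
    case (insert v A')
    from insert(5) obtain f where f: "inj_on f (B \<union> A')" "f ` B \<subseteq> U" "f ` A' \<subseteq> V"
      "\<forall>(u, z)\<in>EH. u \<in> A' \<longrightarrow> (f u, f z) \<in> E" by blast
    have v: "v \<notin> B \<union> A'" using insert AB by auto
    have "B \<union> A' \<subset> VH" using v insert(2,3) AB(2) by auto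
    then have "card (f ` (B \<union> A')) < card VH"
      using card_image_le[OF finite_UnI[OF finB insert(1)], of f] psubset_card_mono[OF finVH]
      by (meson le_less_trans)
    moreover have out_B: "{z. (v, z) \<in> EH} \<subseteq> B" using AB(3) by auto
    then have "f ` {z. (v, z) \<in> EH} \<subseteq> U" using f(2) by blast
    moreover have "card (f ` {z. (v, z) \<in> EH}) \<le> r"
      using card_image_le[OF finite_subset[OF out_B finB], of f] out_deg[OF insert(2)]
      by linarith
    moreover have "finite (f ` (B \<union> A'))" using finB insert(1) by blast
    ultimately obtain w where w: "w \<in> common_in_nbhd V E (f ` {z. (v, z) \<in> EH})"
      "w \<notin> f ` (B \<union> A')"
      using fresh by blast
    have "inj_on (f(v := w)) (B \<union> A')" using f(1) w(2) by (rule inj_on_fun_updI)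
    moreover have "(f(v := w)) ` (B \<union> A') = f ` (B \<union> A')" using v by (intro image_cong) auto
    ultimately have "inj_on (f(v := w)) (B \<union> insert v A')" using w(2) v by simp
    moreover have "(f(v := w)) ` B \<subseteq> U" "(f(v := w)) ` insert v A' \<subseteq> V"
      using f(2,3) v w(1) by (auto simp: common_in_nbhd_def)
    moreover have "\<forall>(u, z)\<in>EH. u \<in> insert v A' \<longrightarrow> ((f(v := w)) u, (f(v := w)) z) \<in> E"
      using f(4) v w(1) AB(3) by (auto simp: common_in_nbhd_def)
    ultimately show ?case by (intro exI[of _ "f(v := w)"] conjI)
  qed
  from this[OF order_refl] obtain f where "inj_on f (B \<union> A)" "f ` B \<subseteq> U" "f ` A \<subseteq> V"
    "\<forall>(u, z)\<in>EH. u \<in> A \<longrightarrow> (f u, f z) \<in> E" by blast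
  then show ?thesis
    unfolding contains_oriented_def using AB UV by (intro exI[of _ f]) (auto simp: Un_commute)
qed

lemma card_arcs_power_le_if_not_contains:
  fixes VH :: "'b set" and EH :: "('b \<times> 'b) set" and V :: "'a set" and E :: "('a \<times> 'a) set"
  assumes "finite VH" "A \<inter> B = {}" "A \<union> B = VH" "EH \<subseteq> A \<times> B"
    and "\<And>v. v \<in> A \<Longrightarrow> card {z. (v, z) \<in> EH} \<le> r" and "0 < r"
    and "finite V" "E \<subseteq> V \<times> V" "\<not> contains_oriented V E VH EH"
  shows "card E ^ r \<le> (card VH ^ r + card VH) * card V ^ (2 * r - 1)"
proof (rule ccontr)
  assume "\<not> ?thesis"
  then obtain U where U: "U \<subseteq> V" "card VH < card U"
    "\<And>T. T \<subseteq> U \<Longrightarrow> card T \<le> r \<Longrightarrow> card VH \<le> card (common_in_nbhd V E T)"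
    using dependent_random_choice[OF assms(7,8,6)] by (metis not_le)
  moreover have "card B \<le> card VH" using assms(1,3) by (metis card_mono sup_ge2)
  ultimately have "contains_oriented V E VH EH"
    by (intro contains_oriented_if_rich_set[OF assms(1-5,7)]) auto
  with assms(9) show False by contradiction
qed

lemma le_powr_bound_if_power_le:
  fixes x c y :: real
  assumes "0 \<le> c" "0 \<le> y" "0 < r" and "x ^ r \<le> c * y ^ (2 * r - 1)"
  shows "x \<le> c powr (1 / r) * y powr (2 - 1 / r)"
proof (rule power_le_imp_le_base)
  have "(c powr (1 / r) * y powr (2 - 1 / r)) ^ r
      = c powr (r * (1 / r)) * y powr (r * (2 - 1 / r))"
    using assms(3) by (cases "c = 0 \<or> y = 0") (auto simp: power_mult_distrib powr_power)
  also have "r * (2 - 1 / r) = real (2 * r - 1)"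
    using assms(3) by (simp add: of_nat_diff field_simps)
  also have "real r * (1 / r) = 1"
    using assms(3) by simp
  also have "c powr 1 * y powr real (2 * r - 1) = c * y ^ (2 * r - 1)"
    using assms by (cases "y = 0") (simp_all add: powr_realpow del: of_nat_diff)
  finally show "x ^ Suc (r - 1) \<le> (c powr (1 / r) * y powr (2 - 1 / r)) ^ Suc (r - 1)"
    using assms by simp
qed simp

lemma ex_oriented_le:
  fixes c :: real
  assumes "0 \<le> c"
    and "\<And>E. oriented_graph {0..<n} E \<Longrightarrow> \<not> contains_oriented {0..<n} E VH EH \<Longrightarrow> card E \<le> c"
  shows "ex_oriented n VH EH \<le> c"
proof -
  define S where "S = {card E | E. oriented_graph {0..<n} E \<and> \<not> contains_oriented {0..<n} E VH EH}"
  have "S \<subseteq> card ` Pow ({0..<n} \<times> {0..<n})"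
    by (auto simp: S_def oriented_graph_def)
  then have "finite S" by (rule finite_subset) simp
  then show ?thesis
    using assms Max_in[of S] unfolding ex_oriented_def S_def[symmetric]
    by (cases "S = {}") (auto simp: Sup_nat_def S_def)
qed

lemma oriented_graph_converse: "oriented_graph V (E\<inverse>) \<longleftrightarrow> oriented_graph V E"
  by (auto simp: oriented_graph_def)

lemma contains_oriented_converse:
  "contains_oriented V (E\<inverse>) VH (EH\<inverse>) \<longleftrightarrow> contains_oriented V E VH EH"
proof -
  have "(\<forall>(u, v)\<in>EH\<inverse>. (f u, f v) \<in> E\<inverse>) \<longleftrightarrow> (\<forall>(u, v)\<in>EH. (f u, f v) \<in> E)" for f
    by auto
  then show ?thesis by (simp add: contains_oriented_def)
qed

lemma ex_oriented_converse: "ex_oriented n VH (EH\<inverse>) = ex_oriented n VH EH"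
proof -
  have "{card E | E. oriented_graph {0..<n} E \<and> \<not> contains_oriented {0..<n} E VH (EH\<inverse>)}
      = {card E | E. oriented_graph {0..<n} E \<and> \<not> contains_oriented {0..<n} E VH EH}"
    by (metis (no_types, opaque_lifting) card_inverse contains_oriented_converse
        converse_converse oriented_graph_converse)
  then show ?thesis by (simp add: ex_oriented_def)
qed

lemma udeg_converse: "udeg (EH\<inverse>) = udeg EH"
  by (auto simp: udeg_def disj_commute)

lemma Delta'_converse: "Delta' (EH\<inverse>) B A = Delta' EH A B"
  by (simp add: Delta'_def udeg_converse min.commute)

lemma ex_oriented_bigo_square: "(\<lambda>n. real (ex_oriented n VH EH)) \<in> O(\<lambda>n. real n powr 2)"
proof -
  have "real (ex_oriented n VH EH) \<le> real n powr 2" for n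
  proof (rule ex_oriented_le)
    fix E assume "oriented_graph {0..<n} E"
    then have "card E \<le> card ({0..<n} \<times> {0..<n})"
      by (intro card_mono) (auto simp: oriented_graph_def)
    then show "real (card E) \<le> real n powr 2"
      by (simp add: power2_eq_square flip: of_nat_mult)
  qed simp
  then show ?thesis by (intro bigoI[where c = 1]) (auto intro!: always_eventually)
qed

lemma ex_oriented_bigo_if_udeg_le:
  fixes VH :: "'b set" and EH :: "('b \<times> 'b) set"
  assumes H: "oriented_graph VH EH" "A \<inter> B = {}" "A \<union> B = VH" "EH \<subseteq> A \<times> B"
    and deg: "\<And>v. v \<in> A \<Longrightarrow> udeg EH v \<le> r" and r: "0 < r"
  shows "(\<lambda>n. real (ex_oriented n VH EH)) \<in> O(\<lambda>n. real n powr (2 - 1 / real r))"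
proof -
  have finVH: "finite VH" and EH: "EH \<subseteq> VH \<times> VH" using H(1) by (simp_all add: oriented_graph_def)
  have out_deg: "card {z. (v, z) \<in> EH} \<le> r" if "v \<in> A" for v
  proof -
    have "{u. (v, u) \<in> EH \<or> (u, v) \<in> EH} \<subseteq> VH" using EH by auto
    then have "card {z. (v, z) \<in> EH} \<le> udeg EH v"
      unfolding udeg_def by (intro card_mono) (auto intro: finite_subset[OF _ finVH])
    with deg[OF that] show ?thesis by linarith
  qed
  define K where "K = card VH ^ r + card VH"
  have "real (ex_oriented n VH EH) \<le> real K powr (1 / r) * real n powr (2 - 1 / r)" for n
  proof (rule ex_oriented_le)
    fix E assume "oriented_graph {0..<n} E" "\<not> contains_oriented {0..<n} E VH EH"
    then have "card E ^ r \<le> K * n ^ (2 * r - 1)"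
      using card_arcs_power_le_if_not_contains[OF finVH H(2-4) out_deg r, of "{0..<n}" E]
      by (simp add: oriented_graph_def K_def)
    then show "real (card E) \<le> real K powr (1 / r) * real n powr (2 - 1 / r)"
      by (intro le_powr_bound_if_power_le[OF _ _ r]) (simp_all flip: of_nat_power of_nat_mult)
  qed simp
  then show ?thesis by (intro bigoI[where c = "real K powr (1 / r)"]) (auto intro!: always_eventually)
qed

theorem corollary11:
  fixes VH :: "'b set" and EH :: "('b \<times> 'b) set" and A B :: "'b set"
  assumes "oriented_graph VH EH"
    and "A \<inter> B = {}" and "A \<union> B = VH"
    and "EH \<subseteq> A \<times> B"
  shows "(\<lambda>n. real (ex_oriented n VH EH))
           \<in> O(\<lambda>n. real n powr (2 - 1 / real (Delta' EH A B)))"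
proof -
  have finite_sides: "finite A" "finite B"
    using assms(1,3) by (auto simp: oriented_graph_def)
  consider "Delta' EH A B = 0"
    | "0 < Delta' EH A B" "Delta' EH A B = Sup (udeg EH ` A)"
    | "0 < Delta' EH A B" "Delta' EH A B = Sup (udeg EH ` B)"
    unfolding Delta'_def by linarith
  then show ?thesis
  proof cases
    case 1
    \<comment> \<open>the exponent is then 2, since \<open>1 / 0 = 0\<close>\<close>
    then show ?thesis using ex_oriented_bigo_square by simp
  next
    case 2
    then show ?thesis
      using assms finite_sides(1) by (intro ex_oriented_bigo_if_udeg_le) (auto intro: le_cSup_finite)
  next
    case 3
    then have "(\<lambda>n. real (ex_oriented n VH (EH\<inverse>)))
        \<in> O(\<lambda>n. real n powr (2 - 1 / real (Delta' (EH\<inverse>) B A)))"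
      using assms finite_sides(2)
      by (intro ex_oriented_bigo_if_udeg_le[of VH "EH\<inverse>" B A])
        (auto simp: oriented_graph_converse Delta'_converse udeg_converse intro: le_cSup_finite)
    then show ?thesis by (simp add: ex_oriented_converse Delta'_converse)
  qed
qed

end
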